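(* Assume $0\le\gamma\le2$, (H1) and (H2). Let $f$ be measurable with $0\le f\le1$ and $\|f\|_{1,2}<\infty$, and suppose that for some $\bar v\in\mathbb{R}^3$, $\delta>0$ and $0<\epsilon<1$ we have $f(v)\ge\epsilon$ whenever $|v-\bar v|\le\delta$. Then there exist constants $C_1,C_2>0$ depending only on $\gamma,C_b,c_b$ such that for every $0<\eta<1-\frac1{\sqrt2}$ and every $v$ with $\delta<|v-\bar v|\le\sqrt2\,\delta(1-\eta)$, $$Q_1(f,f,1-f)(v)\ge\delta^{3+\gamma}\epsilon^2\Big(C_1\eta^{5/2}-C_2\min\{\delta^{-3}\|f\|_{1,2}^{3/5},1\}\Big).$$ If moreover $f(v)\le1-\epsilon$ whenever $|v-\bar v|\le\delta$, then there is $C_3>0$ depending only on $\gamma$ and $c_b$ such that for the same $\eta,v$, $$Q_1(f,f,1-f)(v)\ge C_3\delta^{3+\gamma}\eta^{5/2}\epsilon^3,\qquad Q_1(1-f,1-f,f)(v)\ge C_3\delta^{3+\gamma}\eta^{5/2}\epsilon^3.$$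
   Context: Throughout, $v,v_*\in\mathbb{R}^3$, $\sigma\in\mathbb{S}^2$, and the post-collisional velocities are $v'=\frac{v+v_*}{2}+\frac{|v-v_*|}{2}\sigma$, $v'_*=\frac{v+v_*}{2}-\frac{|v-v_*|}{2}\sigma$; the angle $\theta\in[0,\pi]$ is defined by $\cos\theta=\frac{v-v_*}{|v-v_*|}\cdot\sigma$. The collision kernel is $B(v-v_*,\sigma)=|v-v_*|^\gamma b(\cos\theta)$ with $\gamma\ge0$ and $b\ge0$ measurable with $b(\cos(\pi-\theta))=b(\cos\theta)$. (H1): $0<C_b:=2\pi\int_0^\pi b(\cos\theta)\sin\theta\,d\theta<\infty$. (H2): there is $c_b>0$ with $b(\cos\theta)>c_b$ for $\theta\in[\pi/4,3\pi/4]$. $\|f\|_{1,s}=\int_{\mathbb{R}^3}|f(v)|(1+|v|^2)^{s/2}dv$. For measurable $f_1,f_2,f_3\ge0$: $Q_1(f_1,f_2,f_3)(v)=\int_{\mathbb{R}^3\times\mathbb{S}^2}B(v-v_*,\sigma)f_1(v')f_2(v'_* )f_3(v_* )\,d\sigma\,dv_*$. *)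

theory Defs
  imports "HOL-Analysis.Analysis"
begin

type_synonym vec3 = "real^3"

text \<open>Integral over the unit sphere S^2 with respect to the surface measure,
  defined via the cone measure: the surface measure of A equals
  3 times the Lebesgue measure of the cone {r x | 0 < r \<le> 1, x \<in> A}.\<close>
definition sphere_nn_integral :: "(vec3 \<Rightarrow> ennreal) \<Rightarrow> ennreal" where
  "sphere_nn_integral g = 3 * (\<integral>\<^sup>+ x. indicator (ball 0 1) x * g (sgn x) \<partial>lborel)"

definition vpost :: "vec3 \<Rightarrow> vec3 \<Rightarrow> vec3 \<Rightarrow> vec3" where
  "vpost v vs \<sigma> = (1/2) *\<^sub>R (v + vs) + (norm (v - vs) / 2) *\<^sub>R \<sigma>"

definition vpost_star :: "vec3 \<Rightarrow> vec3 \<Rightarrow> vec3 \<Rightarrow> vec3" where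
  "vpost_star v vs \<sigma> = (1/2) *\<^sub>R (v + vs) - (norm (v - vs) / 2) *\<^sub>R \<sigma>"

definition cos_theta :: "vec3 \<Rightarrow> vec3 \<Rightarrow> vec3 \<Rightarrow> real" where
  "cos_theta v vs \<sigma> = ((v - vs) \<bullet> \<sigma>) / norm (v - vs)"

definition kernelB :: "real \<Rightarrow> (real \<Rightarrow> real) \<Rightarrow> vec3 \<Rightarrow> vec3 \<Rightarrow> vec3 \<Rightarrow> real" where
  "kernelB \<gamma> b v vs \<sigma> = norm (v - vs) powr \<gamma> * b (cos_theta v vs \<sigma>)"

definition Q1 :: "real \<Rightarrow> (real \<Rightarrow> real) \<Rightarrow> (vec3 \<Rightarrow> real) \<Rightarrow> (vec3 \<Rightarrow> real)
    \<Rightarrow> (vec3 \<Rightarrow> real) \<Rightarrow> vec3 \<Rightarrow> ennreal" where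
  "Q1 \<gamma> b f1 f2 f3 v = (\<integral>\<^sup>+ vs. sphere_nn_integral (\<lambda>\<sigma>.
      ennreal (kernelB \<gamma> b v vs \<sigma> * f1 (vpost v vs \<sigma>) * f2 (vpost_star v vs \<sigma>) * f3 vs)) \<partial>lborel)"

definition Cb_of :: "(real \<Rightarrow> real) \<Rightarrow> ennreal" where
  "Cb_of b = 2 * ennreal pi * (\<integral>\<^sup>+ \<theta>. indicator {0..pi} \<theta> * ennreal (b (cos \<theta>) * sin \<theta>) \<partial>lborel)"

definition norm1s :: "real \<Rightarrow> (vec3 \<Rightarrow> real) \<Rightarrow> ennreal" where
  "norm1s s f = (\<integral>\<^sup>+ v. ennreal (\<bar>f v\<bar> * (1 + norm v ^ 2) powr (s / 2)) \<partial>lborel)"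

definition admissible_b :: "(real \<Rightarrow> real) \<Rightarrow> bool" where
  "admissible_b b \<longleftrightarrow> b \<in> borel_measurable borel \<and> (\<forall>t\<in>{-1..1}. b t \<ge> 0)
     \<and> (\<forall>\<theta>\<in>{0..pi}. b (cos (pi - \<theta>)) = b (cos \<theta>))"

end

theory Submission
  imports Defs
begin

(*
  Take v_* in the ball of radius delta sqrt(eta) / 10 around vbar, and sigma in the band
  |sigma . n| <= eta / 4 orthogonal to n = (v - vbar) + (v_* - vbar). Then both post-collisional
  velocities fall into the ball B(vbar, delta) on which f >= epsilon, the deviation angle lies in
  [pi/4, 3 pi/4] so that b > c_b, and |v - v_*| >= delta / 2. The band has surface measure of
  order eta and the ball of admissible v_* has volume of order delta^3 eta^(3/2); this gives
  delta^(3+gamma) eta^(5/2) epsilon^2 times the mean of the third argument of Q1 over that ball.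
  That mean is at least epsilon under the two-sided bound on f. For the third argument 1 - f it is
  the volume of the ball minus the mass of f, and the mass is at most
  |B_R| + ||f||_{1,2} / R^2 <= C ||f||_{1,2}^(3/5).
*)

lemma prod_3: "prod f (UNIV::3 set) = f 1 * f 2 * f 3"
  unfolding UNIV_3 by (simp add: ac_simps)

lemma cone_over_band_exists:
  fixes n :: vec3
  assumes n: "norm n = 1" and w: "0 < w" "w \<le> 1"
  obtains E where "E \<in> sets lborel" "E \<subseteq> ball 0 1" "ennreal (w / 400) \<le> emeasure lborel E"
    "\<And>x. x \<in> E \<Longrightarrow> x \<noteq> 0 \<and> \<bar>sgn x \<bullet> n\<bar> \<le> w"
proof -
  obtain T :: "vec3 \<Rightarrow> vec3" where T: "orthogonal_transformation T" "T (axis 3 1) = n"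
    using orthogonal_transformation_exists_1[OF norm_axis_1 n] by blast
  define B :: "vec3 set" where "B = cbox (vector [1/2, 0, 0]) (vector [3/5, 1/10, w/4])"
  have B: "1/2 \<le> y$1 \<and> norm y < 1 \<and> \<bar>y$3\<bar> \<le> w/4" if "y \<in> B" for y
  proof -
    have c: "1/2 \<le> y$1" "y$1 \<le> 3/5" "0 \<le> y$2" "y$2 \<le> 1/10" "0 \<le> y$3" "y$3 \<le> w/4"
      using that unfolding B_def by (auto simp: mem_box_cart forall_3)
    have "norm y \<le> \<bar>y$1\<bar> + \<bar>y$2\<bar> + \<bar>y$3\<bar>"
      using norm_le_l1_cart[of y] by (simp add: sum_3)
    then show ?thesis using c w by simp
  qed
  have "compact (T ` B)"
    unfolding B_def using T(1) orthogonal_transformation_linear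
    by (intro compact_continuous_image linear_continuous_on compact_cbox) (auto simp: linear_linear)
  then have meas: "T ` B \<in> sets lborel" and fin: "emeasure lborel (T ` B) \<noteq> top"
    using emeasure_bounded_finite[OF compact_imp_bounded] by (auto simp: compact_imp_closed borel_closed less_top)
  show ?thesis
  proof
    show "T ` B \<in> sets lborel" by (fact meas)
    show "T ` B \<subseteq> ball 0 1"
      using B T(1) by (auto simp: orthogonal_transformation_norm)
    have "measure lborel (T ` B) = measure lebesgue (T ` B)"
      using meas by simp
    also have "\<dots> = measure lebesgue B"
      using measure_orthogonal_image[OF T(1), of B] unfolding B_def by simp
    also have "\<dots> = (3/5 - 1/2) * (1/10) * (w/4)"
    proof -
      have "vector [1/2, 0, 0] \<in> B" unfolding B_def using w by (simp add: mem_box_cart forall_3)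
      then have "B \<noteq> {}" by blast
      then show ?thesis unfolding B_def by (simp add: content_cbox_cart prod_3)
    qed
    also have "\<dots> = w / 400" by simp
    finally show "ennreal (w / 400) \<le> emeasure lborel (T ` B)"
      using emeasure_eq_ennreal_measure[OF fin] by simp
  next
    fix x assume "x \<in> T ` B"
    then obtain y where y: "y \<in> B" "x = T y" by auto
    have ny: "norm x = norm y" using y T(1) by (simp add: orthogonal_transformation_norm)
    have "x \<bullet> n = T y \<bullet> T (axis 3 1)" using y T(2) by simp
    also have "\<dots> = y$3"
      using T(1) unfolding orthogonal_transformation_def by (simp add: inner_axis)
    finally have "x \<bullet> n = y$3" .
    then have "sgn x \<bullet> n = y$3 / norm y" using ny by (simp add: sgn_div_norm divide_inverse_commute)
    then have "\<bar>sgn x \<bullet> n\<bar> = \<bar>y$3\<bar> / norm y" by (simp add: abs_div)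
    also have "\<dots> \<le> (w/4) / (1/2)"
      using B[OF y(1)] component_le_norm_cart[of y 1] by (intro frac_le) auto
    also have "\<dots> \<le> w" using w by simp
    finally show "x \<noteq> 0 \<and> \<bar>sgn x \<bullet> n\<bar> \<le> w"
      using B[OF y(1)] ny by auto
  qed
qed

lemma sphere_nn_integral_band_lower:
  fixes n :: vec3 and g :: "vec3 \<Rightarrow> ennreal"
  assumes n: "norm n = 1" and w: "0 < w" "w \<le> 1" and c: "0 \<le> c"
    and g: "\<And>\<sigma>. norm \<sigma> = 1 \<Longrightarrow> \<bar>\<sigma> \<bullet> n\<bar> \<le> w \<Longrightarrow> ennreal c \<le> g \<sigma>"
  shows "ennreal (3 / 400 * c * w) \<le> sphere_nn_integral g"
proof -
  obtain E where E: "E \<in> sets lborel" "E \<subseteq> ball 0 1" "ennreal (w / 400) \<le> emeasure lborel E"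
    and band: "\<And>x. x \<in> E \<Longrightarrow> x \<noteq> 0 \<and> \<bar>sgn x \<bullet> n\<bar> \<le> w"
    using cone_over_band_exists[OF n w] by blast
  have pointwise: "ennreal c * indicator E x \<le> indicator (ball 0 1) x * g (sgn x)" for x
    using E(2) band[of x] g[of "sgn x"] by (cases "x \<in> E") (auto simp: norm_sgn)
  have "ennreal (3 / 400 * c * w) = 3 * (ennreal c * ennreal (w / 400))"
    using c by (simp del: ennreal_numeral add: ennreal_mult'[symmetric] ennreal_numeral[symmetric] mult.assoc)
  also have "\<dots> \<le> 3 * (ennreal c * emeasure lborel E)"
    using E(3) by (intro mult_left_mono) auto
  also have "\<dots> = 3 * (\<integral>\<^sup>+ x. ennreal c * indicator E x \<partial>lborel)"
    using E(1) by (simp add: nn_integral_cmult_indicator)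
  also have "\<dots> \<le> 3 * (\<integral>\<^sup>+ x. indicator (ball 0 1) x * g (sgn x) \<partial>lborel)"
    by (intro mult_left_mono nn_integral_mono pointwise) auto
  also have "\<dots> = sphere_nn_integral g"
    unfolding sphere_nn_integral_def ..
  finally show ?thesis .
qed

lemma norm_midpoint_add_sq:
  fixes a u \<sigma> :: "'a::real_inner"
  assumes "norm \<sigma> = 1"
  shows "(norm ((1/2) *\<^sub>R (a + u) + (norm (a - u) / 2) *\<^sub>R \<sigma>))\<^sup>2
    = ((norm a)\<^sup>2 + (norm u)\<^sup>2) / 2 + norm (a - u) / 2 * ((a + u) \<bullet> \<sigma>)"
proof -
  define r where "r = norm (a - u)"
  have "\<sigma> \<bullet> \<sigma> = 1" using assms by (simp add: power2_norm_eq_inner[symmetric])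
  moreover have "r * r = a \<bullet> a - 2 * (a \<bullet> u) + u \<bullet> u"
  proof -
    have "r * r = (a - u) \<bullet> (a - u)" unfolding r_def by (simp add: dot_square_norm power2_eq_square)
    then show ?thesis by (simp add: inner_diff_left inner_diff_right inner_commute)
  qed
  ultimately show ?thesis
    unfolding power2_norm_eq_inner r_def[symmetric]
    by (simp add: inner_add_left inner_add_right inner_commute field_simps)
qed

lemma norm_vpost_sub_sq:
  fixes v vs c \<sigma> :: vec3
  assumes "norm \<sigma> = 1"
  shows "(norm (vpost v vs \<sigma> - c))\<^sup>2 = ((norm (v - c))\<^sup>2 + (norm (vs - c))\<^sup>2) / 2
      + norm (v - vs) / 2 * (((v - c) + (vs - c)) \<bullet> \<sigma>)"
proof -
  have "vpost v vs \<sigma> - c = (1/2) *\<^sub>R ((v - c) + (vs - c)) + (norm ((v - c) - (vs - c)) / 2) *\<^sub>R \<sigma>"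
    unfolding vpost_def by (simp add: vec_eq_iff algebra_simps)
  then show ?thesis using norm_midpoint_add_sq[OF assms, of "v - c" "vs - c"] by simp
qed

lemma vpost_star_eq_vpost_neg: "vpost_star v vs \<sigma> = vpost v vs (- \<sigma>)"
  unfolding vpost_def vpost_star_def by simp

lemma vpost_in_cball:
  fixes v vs c \<sigma> :: vec3
  assumes \<sigma>: "norm \<sigma> = 1" and \<delta>: "0 \<le> \<delta>"
    and bound: "((norm (v - c))\<^sup>2 + (norm (vs - c))\<^sup>2) / 2
      + norm (v - vs) / 2 * \<bar>((v - c) + (vs - c)) \<bullet> \<sigma>\<bar> \<le> \<delta>\<^sup>2"
  shows "vpost v vs \<sigma> \<in> cball c \<delta>" "vpost_star v vs \<sigma> \<in> cball c \<delta>"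
proof -
  have "vpost v vs \<tau> \<in> cball c \<delta>"
    if "norm \<tau> = 1" "((v - c) + (vs - c)) \<bullet> \<tau> \<le> \<bar>((v - c) + (vs - c)) \<bullet> \<sigma>\<bar>" for \<tau>
  proof -
    have "norm (v - vs) / 2 * (((v - c) + (vs - c)) \<bullet> \<tau>)
        \<le> norm (v - vs) / 2 * \<bar>((v - c) + (vs - c)) \<bullet> \<sigma>\<bar>"
      using that(2) by (rule mult_left_mono) simp
    then have "(norm (vpost v vs \<tau> - c))\<^sup>2 \<le> \<delta>\<^sup>2"
      using norm_vpost_sub_sq[OF that(1), of v vs c] bound by linarith
    then have "norm (vpost v vs \<tau> - c) \<le> \<delta>" using \<delta> by (rule power2_le_imp_le)
    then show ?thesis by (simp add: dist_norm norm_minus_commute)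
  qed
  from this[of \<sigma>] this[of "- \<sigma>"] show "vpost v vs \<sigma> \<in> cball c \<delta>" "vpost_star v vs \<sigma> \<in> cball c \<delta>"
    using \<sigma> by (simp_all add: vpost_star_eq_vpost_neg)
qed

lemma collision_geometry_bounds:
  fixes v vs c \<sigma> :: vec3
  assumes \<delta>: "0 < \<delta>" and \<eta>: "0 < \<eta>" "\<eta> \<le> 1"
    and v: "\<delta> < norm (v - c)" "norm (v - c) \<le> sqrt 2 * \<delta> * (1 - \<eta>)"
    and vs: "norm (vs - c) \<le> \<delta> * sqrt \<eta> / 10"
    and band: "\<bar>\<sigma> \<bullet> sgn ((v - c) + (vs - c))\<bar> \<le> \<eta> / 4"
  shows "norm (vs - c) \<le> \<delta> / 10" "\<delta> / 2 \<le> norm (v - vs)" "norm (v - vs) \<le> 2 * \<delta>"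
    "\<bar>((v - c) + (vs - c)) \<bullet> \<sigma>\<bar> \<le> \<delta> * \<eta> / 2"
proof -
  define p where "p = (v - c) + (vs - c)"
  have "\<delta> * sqrt \<eta> \<le> \<delta> * 1" using \<delta> \<eta> by (intro mult_left_mono) auto
  then show vs': "norm (vs - c) \<le> \<delta> / 10" using vs by simp
  have "sqrt 2 * \<delta> * (1 - \<eta>) \<le> 3/2 * \<delta> * 1"
    using \<delta> \<eta> by (intro mult_mono real_le_lsqrt) (auto simp: power2_eq_square)
  then have v': "norm (v - c) \<le> 3/2 * \<delta>" using v(2) by simp
  have "norm (v - vs) = norm ((v - c) - (vs - c))" by simp
  then show "\<delta> / 2 \<le> norm (v - vs)" "norm (v - vs) \<le> 2 * \<delta>"
    using norm_triangle_ineq2[of "v - c" "vs - c"] norm_triangle_ineq4[of "v - c" "vs - c"] v(1) v' vs'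
    by linarith+
  have "norm p \<le> 2 * \<delta>" unfolding p_def using norm_triangle_ineq[of "v - c" "vs - c"] v' vs' \<delta> by linarith
  have "p \<bullet> \<sigma> = norm p * (\<sigma> \<bullet> sgn p)"
    by (cases "p = 0") (simp_all add: sgn_div_norm inner_commute field_simps)
  then have "\<bar>p \<bullet> \<sigma>\<bar> = norm p * \<bar>\<sigma> \<bullet> sgn p\<bar>" by (simp add: abs_mult)
  also have "\<dots> \<le> (2 * \<delta>) * (\<eta> / 4)"
    using \<open>norm p \<le> 2 * \<delta>\<close> band \<delta> unfolding p_def by (intro mult_mono) auto
  finally show "\<bar>((v - c) + (vs - c)) \<bullet> \<sigma>\<bar> \<le> \<delta> * \<eta> / 2" unfolding p_def by simp
qed

lemma collision_geometry:
  fixes v vs c \<sigma> :: vec3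
  assumes \<delta>: "0 < \<delta>" and \<eta>: "0 < \<eta>" "\<eta> \<le> 3/10"
    and v: "\<delta> < norm (v - c)" "norm (v - c) \<le> sqrt 2 * \<delta> * (1 - \<eta>)"
    and vs: "norm (vs - c) \<le> \<delta> * sqrt \<eta> / 10"
    and \<sigma>: "norm \<sigma> = 1" and band: "\<bar>\<sigma> \<bullet> sgn ((v - c) + (vs - c))\<bar> \<le> \<eta> / 4"
  shows "vpost v vs \<sigma> \<in> cball c \<delta>" "vpost_star v vs \<sigma> \<in> cball c \<delta>"
    "\<delta> / 2 \<le> norm (v - vs)" "\<bar>cos_theta v vs \<sigma>\<bar> \<le> 7/10"
proof -
  define p where "p = (v - c) + (vs - c)"
  have "\<eta> \<le> 1" using \<eta>(2) by simp
  note bounds = collision_geometry_bounds[OF \<delta> \<eta>(1) this v vs band, folded p_def]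
  have "(norm (v - c))\<^sup>2 \<le> 2 * \<delta>\<^sup>2 - 2 * (\<delta>\<^sup>2 * \<eta>)"
  proof -
    have "(norm (v - c))\<^sup>2 \<le> (sqrt 2 * \<delta> * (1 - \<eta>))\<^sup>2" using v by (intro power_mono) auto
    also have "\<dots> = 2 * \<delta>\<^sup>2 * (1 - \<eta>)\<^sup>2" by (simp add: power_mult_distrib)
    also have "\<dots> \<le> 2 * \<delta>\<^sup>2 * (1 - \<eta>)"
      using \<eta> by (intro mult_left_mono) (auto simp: power2_eq_square mult_le_cancel_left1)
    finally show ?thesis by (simp add: algebra_simps)
  qed
  moreover have "(norm (vs - c))\<^sup>2 \<le> (\<delta> * sqrt \<eta> / 10)\<^sup>2" using vs by (intro power_mono) auto
  then have "(norm (vs - c))\<^sup>2 \<le> \<delta>\<^sup>2 * \<eta> / 100" using \<eta> by (simp add: power_mult_distrib power_divide)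
  moreover have "norm (v - vs) / 2 * \<bar>p \<bullet> \<sigma>\<bar> \<le> \<delta> * (\<delta> * \<eta> / 2)"
    using bounds(3,4) \<delta> by (intro mult_mono) auto
  then have "norm (v - vs) / 2 * \<bar>p \<bullet> \<sigma>\<bar> \<le> \<delta>\<^sup>2 * \<eta> / 2" by (simp add: power2_eq_square)
  moreover have "0 \<le> \<delta>\<^sup>2 * \<eta>" using \<eta> by simp
  ultimately have "((norm (v - c))\<^sup>2 + (norm (vs - c))\<^sup>2) / 2 + norm (v - vs) / 2 * \<bar>p \<bullet> \<sigma>\<bar> \<le> \<delta>\<^sup>2"
    unfolding add_divide_distrib by linarith
  then show "vpost v vs \<sigma> \<in> cball c \<delta>" "vpost_star v vs \<sigma> \<in> cball c \<delta>"
    using vpost_in_cball[OF \<sigma>] \<delta> unfolding p_def by auto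
  show "\<delta> / 2 \<le> norm (v - vs)" by (fact bounds(2))
  have "v - vs = p - 2 *\<^sub>R (vs - c)" unfolding p_def by (simp add: scaleR_2 algebra_simps)
  then have "(v - vs) \<bullet> \<sigma> = p \<bullet> \<sigma> - 2 * ((vs - c) \<bullet> \<sigma>)" by (simp add: inner_diff_left)
  moreover have "\<bar>(vs - c) \<bullet> \<sigma>\<bar> \<le> \<delta> / 10" using Cauchy_Schwarz_ineq2[of "vs - c" \<sigma>] \<sigma> bounds(1) by simp
  moreover have "\<delta> * \<eta> / 2 \<le> \<delta> * (3/10) / 2" using \<delta> \<eta> by simp
  ultimately have "\<bar>(v - vs) \<bullet> \<sigma>\<bar> \<le> 7/20 * \<delta>" using bounds(4) by linarith
  then have "\<bar>(v - vs) \<bullet> \<sigma>\<bar> / norm (v - vs) \<le> (7/20 * \<delta>) / (\<delta> / 2)"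
    using bounds(2) \<delta> by (intro frac_le) auto
  then show "\<bar>cos_theta v vs \<sigma>\<bar> \<le> 7/10" using \<delta> by (simp add: cos_theta_def abs_div)
qed

lemma angular_kernel_gt_of_abs_le:
  fixes b :: "real \<Rightarrow> real"
  assumes b: "\<forall>\<theta>\<in>{pi/4..3*pi/4}. cb < b (cos \<theta>)" and t: "\<bar>t\<bar> \<le> sqrt 2 / 2"
  shows "cb < b t"
proof -
  have "sqrt 2 \<le> 2" by (rule real_le_lsqrt) (auto simp: power2_eq_square)
  then have t1: "-1 \<le> t" "t \<le> 1" using t by auto
  have arccos45: "arccos (sqrt 2 / 2) = pi / 4" using arccos_cos[of "pi/4"] cos_45 by simp
  have "arccos (sqrt 2 / 2) \<le> arccos t" "arccos t \<le> arccos (- (sqrt 2 / 2))"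
    using t \<open>sqrt 2 \<le> 2\<close> by (auto intro!: arccos_le_arccos)
  moreover have "arccos (- (sqrt 2 / 2)) = pi - arccos (sqrt 2 / 2)"
    by (rule arccos_minus) (use \<open>sqrt 2 \<le> 2\<close> real_sqrt_ge_zero[of 2] in linarith)+
  ultimately have "arccos t \<in> {pi/4..3*pi/4}" using arccos45 by auto
  then have "cb < b (cos (arccos t))" using b by blast
  then show ?thesis using t1 by simp
qed

lemma sphere_nn_integral_collision_lower:
  fixes v vs c :: vec3 and b :: "real \<Rightarrow> real" and f1 f2 :: "vec3 \<Rightarrow> real"
  assumes \<delta>: "0 < \<delta>" and \<eta>: "0 < \<eta>" "\<eta> \<le> 3/10"
    and v: "\<delta> < norm (v - c)" "norm (v - c) \<le> sqrt 2 * \<delta> * (1 - \<eta>)"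
    and vs: "norm (vs - c) \<le> \<delta> * sqrt \<eta> / 10"
    and \<gamma>: "0 \<le> \<gamma>" and cb: "0 \<le> cb" and b: "\<forall>\<theta>\<in>{pi/4..3*pi/4}. cb < b (cos \<theta>)"
    and \<epsilon>: "0 \<le> \<epsilon>" and f1: "\<And>w. w \<in> cball c \<delta> \<Longrightarrow> \<epsilon> \<le> f1 w"
    and f2: "\<And>w. w \<in> cball c \<delta> \<Longrightarrow> \<epsilon> \<le> f2 w" and h: "0 \<le> h"
  shows "ennreal (3/1600 * \<eta> * cb * (\<delta>/2) powr \<gamma> * \<epsilon>\<^sup>2 * h) \<le> sphere_nn_integral (\<lambda>\<sigma>.
      ennreal (kernelB \<gamma> b v vs \<sigma> * f1 (vpost v vs \<sigma>) * f2 (vpost_star v vs \<sigma>) * h))"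
proof -
  define p where "p = (v - c) + (vs - c)"
  have "\<delta> * sqrt \<eta> \<le> \<delta> * 1" using \<delta> \<eta> by (intro mult_left_mono) auto
  then have "norm (v - c) - norm (vs - c) > 0" using \<delta> v(1) vs by linarith
  then have "p \<noteq> 0" unfolding p_def using norm_triangle_ineq2[of "v - c" "c - vs"]
    by (auto simp: norm_minus_commute)
  then have n: "norm (sgn p) = 1" by (simp add: norm_sgn)
  define k where "k = cb * (\<delta>/2) powr \<gamma> * \<epsilon> * \<epsilon> * h"
  have "0 \<le> k" unfolding k_def using cb \<epsilon> h by simp
  have "ennreal k \<le> ennreal (kernelB \<gamma> b v vs \<sigma> * f1 (vpost v vs \<sigma>) * f2 (vpost_star v vs \<sigma>) * h)"
    if \<sigma>: "norm \<sigma> = 1" and in_band: "\<bar>\<sigma> \<bullet> sgn p\<bar> \<le> \<eta> / 4" for \<sigma>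
  proof (rule ennreal_leI)
    note geom = collision_geometry[OF \<delta> \<eta> v vs \<sigma> in_band[unfolded p_def]]
    have "sqrt 2 / 2 \<ge> 7/10" using real_le_rsqrt[of "7/5" 2] by (simp add: power2_eq_square)
    then have "cb < b (cos_theta v vs \<sigma>)"
      using angular_kernel_gt_of_abs_le[OF b] geom(4) by simp
    moreover have "(\<delta>/2) powr \<gamma> \<le> norm (v - vs) powr \<gamma>"
      using geom(3) \<delta> \<gamma> by (intro powr_mono2) auto
    ultimately have kernel: "cb * (\<delta>/2) powr \<gamma> \<le> kernelB \<gamma> b v vs \<sigma>"
      unfolding kernelB_def using cb by (simp add: mult_mono mult.commute)
    moreover have "0 \<le> kernelB \<gamma> b v vs \<sigma>" using cb by (intro order_trans[OF _ kernel]) simp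
    moreover have "\<epsilon> \<le> f1 (vpost v vs \<sigma>)" "\<epsilon> \<le> f2 (vpost_star v vs \<sigma>)"
      using f1[OF geom(1)] f2[OF geom(2)] .
    ultimately show "k \<le> kernelB \<gamma> b v vs \<sigma> * f1 (vpost v vs \<sigma>) * f2 (vpost_star v vs \<sigma>) * h"
      unfolding k_def using cb \<epsilon> h
      by (intro mult_mono mult_right_mono mult_nonneg_nonneg) auto
  qed
  then have "ennreal (3 / 400 * k * (\<eta> / 4)) \<le> sphere_nn_integral (\<lambda>\<sigma>.
      ennreal (kernelB \<gamma> b v vs \<sigma> * f1 (vpost v vs \<sigma>) * f2 (vpost_star v vs \<sigma>) * h))"
    using \<eta> \<open>0 \<le> k\<close> by (intro sphere_nn_integral_band_lower[OF n]) auto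
  then show ?thesis unfolding k_def by (simp add: power2_eq_square mult_ac)
qed

lemma Q1_ge_cball_integral:
  fixes v c :: vec3 and b :: "real \<Rightarrow> real" and f1 f2 f3 :: "vec3 \<Rightarrow> real"
  assumes \<delta>: "0 < \<delta>" and \<eta>: "0 < \<eta>" "\<eta> \<le> 3/10"
    and v: "\<delta> < norm (v - c)" "norm (v - c) \<le> sqrt 2 * \<delta> * (1 - \<eta>)"
    and \<gamma>: "0 \<le> \<gamma>" and cb: "0 \<le> cb" and b: "\<forall>\<theta>\<in>{pi/4..3*pi/4}. cb < b (cos \<theta>)"
    and \<epsilon>: "0 \<le> \<epsilon>" and f1: "\<And>w. w \<in> cball c \<delta> \<Longrightarrow> \<epsilon> \<le> f1 w"
    and f2: "\<And>w. w \<in> cball c \<delta> \<Longrightarrow> \<epsilon> \<le> f2 w"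
    and f3: "f3 \<in> borel_measurable lborel" "\<And>w. 0 \<le> f3 w"
  shows "ennreal (3/1600 * \<eta> * cb * (\<delta>/2) powr \<gamma> * \<epsilon>\<^sup>2)
      * (\<integral>\<^sup>+ w. indicator (cball c (\<delta> * sqrt \<eta> / 10)) w * ennreal (f3 w) \<partial>lborel)
    \<le> Q1 \<gamma> b f1 f2 f3 v"
proof -
  define k where "k = 3/1600 * \<eta> * cb * (\<delta>/2) powr \<gamma> * \<epsilon>\<^sup>2"
  have "0 \<le> k" unfolding k_def using \<eta> cb by simp
  have [measurable]: "f3 \<in> borel_measurable borel" "cball c (\<delta> * sqrt \<eta> / 10) \<in> sets borel"
    using f3(1) by auto
  have "ennreal k * (\<integral>\<^sup>+ w. indicator (cball c (\<delta> * sqrt \<eta> / 10)) w * ennreal (f3 w) \<partial>lborel)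
      = (\<integral>\<^sup>+ w. ennreal k * (indicator (cball c (\<delta> * sqrt \<eta> / 10)) w * ennreal (f3 w)) \<partial>lborel)"
    by (rule nn_integral_cmult[symmetric]) measurable
  also have "\<dots> = (\<integral>\<^sup>+ w. indicator (cball c (\<delta> * sqrt \<eta> / 10)) w * ennreal (k * f3 w) \<partial>lborel)"
    using \<open>0 \<le> k\<close> by (intro nn_integral_cong) (simp add: ennreal_mult' mult_ac)
  also have "\<dots> \<le> Q1 \<gamma> b f1 f2 f3 v"
    unfolding Q1_def
  proof (intro nn_integral_mono)
    fix w :: vec3
    show "indicator (cball c (\<delta> * sqrt \<eta> / 10)) w * ennreal (k * f3 w) \<le> sphere_nn_integral (\<lambda>\<sigma>.
        ennreal (kernelB \<gamma> b v w \<sigma> * f1 (vpost v w \<sigma>) * f2 (vpost_star v w \<sigma>) * f3 w))"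
    proof (cases "w \<in> cball c (\<delta> * sqrt \<eta> / 10)")
      case True
      then have w: "norm (w - c) \<le> \<delta> * sqrt \<eta> / 10" by (simp add: dist_norm norm_minus_commute)
      have "ennreal (3/1600 * \<eta> * cb * (\<delta>/2) powr \<gamma> * \<epsilon>\<^sup>2 * f3 w) \<le> sphere_nn_integral (\<lambda>\<sigma>.
          ennreal (kernelB \<gamma> b v w \<sigma> * f1 (vpost v w \<sigma>) * f2 (vpost_star v w \<sigma>) * f3 w))"
        by (rule sphere_nn_integral_collision_lower[OF \<delta> \<eta> v w \<gamma> cb b \<epsilon>]) (use f1 f2 f3(2) in auto)
      then show ?thesis using True unfolding k_def by (simp add: mult_ac)
    qed simp
  qed
  finally show ?thesis unfolding k_def .
qed

lemma collision_volume_factor: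
  fixes \<delta> \<eta> \<gamma> cb :: real
  assumes "0 < \<delta>" "0 \<le> \<eta>"
  shows "3/1600 * \<eta> * cb * (\<delta>/2) powr \<gamma> * (4/3 * pi * (\<delta> * sqrt \<eta> / 10) ^ 3)
    = cb * pi / (400000 * 2 powr \<gamma>) * \<delta> powr (3 + \<gamma>) * \<eta> powr (5/2)"
proof -
  have "\<eta> powr (5/2) = \<eta> powr 2 * \<eta> powr (1/2)" by (simp add: powr_add[symmetric])
  also have "\<dots> = \<eta> * \<eta> * sqrt \<eta>" using assms(2) by (simp add: powr_half_sqrt power2_eq_square)
  finally have "\<eta> powr (5/2) = \<eta> * \<eta> * sqrt \<eta>" .
  moreover have "sqrt \<eta> ^ 3 = \<eta> * sqrt \<eta>"
    using assms(2) by (simp add: power3_eq_cube)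
  moreover have "\<delta> powr (3 + \<gamma>) = \<delta> ^ 3 * \<delta> powr \<gamma>"
    using assms(1) by (simp add: powr_add powr_realpow)
  moreover have "(\<delta>/2) powr \<gamma> = \<delta> powr \<gamma> / 2 powr \<gamma>"
    using assms(1) by (simp add: powr_divide)
  ultimately show ?thesis by (simp add: power_mult_distrib power_divide field_simps)
qed

lemma collision_loss_factor:
  fixes \<delta> \<eta> \<gamma> cb \<epsilon> N :: real
  assumes \<delta>: "0 < \<delta>" and \<eta>: "0 \<le> \<eta>"
  shows "3/1600 * \<eta> * cb * (\<delta>/2) powr \<gamma> * \<epsilon>\<^sup>2
      * (4/3 * pi * (\<delta> * sqrt \<eta> / 10) ^ 3 - (4/3 * pi + 1) * N powr (3/5))
    = \<delta> powr (3 + \<gamma>) * \<epsilon>\<^sup>2 * (cb * pi / (400000 * 2 powr \<gamma>) * \<eta> powr (5/2)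
      - \<eta> * (3 * cb * (4/3 * pi + 1) / (1600 * 2 powr \<gamma>)) * (\<delta> powr (-3) * N powr (3/5)))"
proof -
  have half: "(\<delta>/2) powr \<gamma> = \<delta> powr (3 + \<gamma>) * \<delta> powr (-3) / 2 powr \<gamma>"
    using \<delta> by (simp add: powr_divide powr_add[symmetric])
  have mass_part: "3/1600 * \<eta> * cb * (\<delta>/2) powr \<gamma> * \<epsilon>\<^sup>2 * ((4/3 * pi + 1) * N powr (3/5))
      = \<delta> powr (3 + \<gamma>) * \<epsilon>\<^sup>2 * (\<eta> * (3 * cb * (4/3 * pi + 1) / (1600 * 2 powr \<gamma>)) * (\<delta> powr (-3) * N powr (3/5)))"
    unfolding half by (simp add: field_simps)
  have "3/1600 * \<eta> * cb * (\<delta>/2) powr \<gamma> * \<epsilon>\<^sup>2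
      * (4/3 * pi * (\<delta> * sqrt \<eta> / 10) ^ 3 - (4/3 * pi + 1) * N powr (3/5))
    = \<epsilon>\<^sup>2 * (3/1600 * \<eta> * cb * (\<delta>/2) powr \<gamma> * (4/3 * pi * (\<delta> * sqrt \<eta> / 10) ^ 3))
      - 3/1600 * \<eta> * cb * (\<delta>/2) powr \<gamma> * \<epsilon>\<^sup>2 * ((4/3 * pi + 1) * N powr (3/5))"
    by (simp add: field_simps)
  also have "\<dots> = \<delta> powr (3 + \<gamma>) * \<epsilon>\<^sup>2 * (cb * pi / (400000 * 2 powr \<gamma>) * \<eta> powr (5/2)
      - \<eta> * (3 * cb * (4/3 * pi + 1) / (1600 * 2 powr \<gamma>)) * (\<delta> powr (-3) * N powr (3/5)))"
    unfolding mass_part collision_volume_factor[OF \<delta> \<eta>] by (simp add: algebra_simps)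
  finally show ?thesis .
qed

lemma emeasure_cball_vec3:
  fixes c :: vec3
  assumes "0 \<le> r"
  shows "emeasure lborel (cball c r) = ennreal (4/3 * pi * r ^ 3)"
  using emeasure_cball[OF assms, of c] by (simp add: unit_ball_vol_3)

lemma Q1_lower_bound_of_ge_on_cball:
  fixes v c :: vec3 and b :: "real \<Rightarrow> real" and f1 f2 f3 :: "vec3 \<Rightarrow> real"
  assumes \<delta>: "0 < \<delta>" and \<eta>: "0 < \<eta>" "\<eta> \<le> 3/10"
    and v: "\<delta> < norm (v - c)" "norm (v - c) \<le> sqrt 2 * \<delta> * (1 - \<eta>)"
    and \<gamma>: "0 \<le> \<gamma>" and cb: "0 \<le> cb" and b: "\<forall>\<theta>\<in>{pi/4..3*pi/4}. cb < b (cos \<theta>)"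
    and \<epsilon>: "0 \<le> \<epsilon>" and f1: "\<And>w. w \<in> cball c \<delta> \<Longrightarrow> \<epsilon> \<le> f1 w"
    and f2: "\<And>w. w \<in> cball c \<delta> \<Longrightarrow> \<epsilon> \<le> f2 w"
    and f3: "f3 \<in> borel_measurable lborel" "\<And>w. 0 \<le> f3 w" "\<And>w. w \<in> cball c \<delta> \<Longrightarrow> \<epsilon> \<le> f3 w"
  shows "ennreal (cb * pi / (400000 * 2 powr \<gamma>) * \<delta> powr (3 + \<gamma>) * \<eta> powr (5/2) * \<epsilon> ^ 3)
    \<le> Q1 \<gamma> b f1 f2 f3 v"
proof -
  define \<rho> where "\<rho> = \<delta> * sqrt \<eta> / 10"
  define k where "k = 3/1600 * \<eta> * cb * (\<delta>/2) powr \<gamma> * \<epsilon>\<^sup>2"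
  have "0 \<le> k" unfolding k_def using \<eta> cb by simp
  have "\<delta> * sqrt \<eta> \<le> \<delta>" using \<delta> \<eta> by (intro mult_left_le) auto
  then have \<rho>: "0 \<le> \<rho>" "\<rho> \<le> \<delta>" unfolding \<rho>_def using \<delta> \<eta> by (simp, linarith)
  have "ennreal (\<epsilon> * (4/3 * pi * \<rho> ^ 3)) = ennreal \<epsilon> * ennreal (4/3 * pi * \<rho> ^ 3)"
    using \<epsilon> by (rule ennreal_mult')
  also have "\<dots> = ennreal \<epsilon> * emeasure lborel (cball c \<rho>)"
    using \<rho> by (simp add: emeasure_cball_vec3)
  also have "\<dots> = (\<integral>\<^sup>+ w. ennreal \<epsilon> * indicator (cball c \<rho>) w \<partial>lborel)"
    by (simp add: nn_integral_cmult_indicator borel_closed)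
  also have "\<dots> \<le> (\<integral>\<^sup>+ w. indicator (cball c \<rho>) w * ennreal (f3 w) \<partial>lborel)"
    using \<rho>(2) f3(3) by (intro nn_integral_mono) (auto simp: indicator_def intro: ennreal_leI)
  finally have mass: "ennreal (\<epsilon> * (4/3 * pi * \<rho> ^ 3))
      \<le> (\<integral>\<^sup>+ w. indicator (cball c \<rho>) w * ennreal (f3 w) \<partial>lborel)" .
  have "k * (\<epsilon> * (4/3 * pi * \<rho> ^ 3))
      = (3/1600 * \<eta> * cb * (\<delta>/2) powr \<gamma> * (4/3 * pi * (\<delta> * sqrt \<eta> / 10) ^ 3)) * \<epsilon> ^ 3"
    unfolding k_def \<rho>_def by (simp add: power2_eq_square power3_eq_cube)
  also have "\<dots> = cb * pi / (400000 * 2 powr \<gamma>) * \<delta> powr (3 + \<gamma>) * \<eta> powr (5/2) * \<epsilon> ^ 3"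
    by (simp only: collision_volume_factor[OF \<delta> less_imp_le[OF \<eta>(1)]])
  finally have factor: "k * (\<epsilon> * (4/3 * pi * \<rho> ^ 3))
      = cb * pi / (400000 * 2 powr \<gamma>) * \<delta> powr (3 + \<gamma>) * \<eta> powr (5/2) * \<epsilon> ^ 3" .
  have "ennreal (cb * pi / (400000 * 2 powr \<gamma>) * \<delta> powr (3 + \<gamma>) * \<eta> powr (5/2) * \<epsilon> ^ 3)
      = ennreal k * ennreal (\<epsilon> * (4/3 * pi * \<rho> ^ 3))"
    unfolding factor[symmetric] using \<open>0 \<le> k\<close> by (rule ennreal_mult')
  also have "\<dots> \<le> ennreal k * (\<integral>\<^sup>+ w. indicator (cball c \<rho>) w * ennreal (f3 w) \<partial>lborel)"
    using mass by (rule mult_left_mono) simp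
  also have "\<dots> \<le> Q1 \<gamma> b f1 f2 f3 v"
    unfolding k_def \<rho>_def by (rule Q1_ge_cball_integral[OF \<delta> \<eta> v \<gamma> cb b \<epsilon> f1 f2 f3(1,2)])
  finally show ?thesis .
qed

lemma nn_integral_le_cball_plus_moment:
  fixes f :: "'a::euclidean_space \<Rightarrow> real"
  assumes f_meas: "f \<in> borel_measurable lborel"
    and f: "\<And>x. 0 \<le> f x" "\<And>x. f x \<le> 1" and R: "0 < R"
  shows "(\<integral>\<^sup>+ x. ennreal (f x) \<partial>lborel) \<le> emeasure lborel (cball (0::'a) R)
      + ennreal (1 / R\<^sup>2) * (\<integral>\<^sup>+ x. ennreal (f x * (1 + (norm x)\<^sup>2)) \<partial>lborel)"
proof -
  have [measurable]: "f \<in> borel_measurable borel" using f_meas by simp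
  have [measurable]: "cball (0::'a) R \<in> sets borel" by (simp add: borel_closed)
  have moment_meas: "(\<lambda>x. ennreal (f x * (1 + (norm x)\<^sup>2))) \<in> borel_measurable lborel"
    by measurable
  have pointwise: "ennreal (f x)
      \<le> indicator (cball 0 R) x + ennreal (1 / R\<^sup>2) * ennreal (f x * (1 + (norm x)\<^sup>2))" for x
  proof (cases "x \<in> cball 0 R")
    case True
    have "ennreal (f x) \<le> 1" using f(2)[of x] ennreal_leI[of "f x" 1] by simp
    then show ?thesis using True by (intro add_increasing2) auto
  next
    case False
    then have "R\<^sup>2 \<le> 1 + (norm x)\<^sup>2" using R by (simp add: power_mono add_increasing)
    then have "f x * R\<^sup>2 \<le> f x * (1 + (norm x)\<^sup>2)" using f(1)[of x] by (rule mult_left_mono)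
    then have "f x \<le> 1 / R\<^sup>2 * (f x * (1 + (norm x)\<^sup>2))" using R by (simp add: field_simps)
    then show ?thesis using False R f(1)[of x] by (simp add: ennreal_leI ennreal_mult[symmetric])
  qed
  have "(\<integral>\<^sup>+ x. ennreal (f x) \<partial>lborel) \<le> (\<integral>\<^sup>+ x. indicator (cball 0 R) x
      + ennreal (1 / R\<^sup>2) * ennreal (f x * (1 + (norm x)\<^sup>2)) \<partial>lborel)"
    by (intro nn_integral_mono pointwise)
  also have "\<dots> = (\<integral>\<^sup>+ x. indicator (cball (0::'a) R) x \<partial>lborel)
      + (\<integral>\<^sup>+ x. ennreal (1 / R\<^sup>2) * ennreal (f x * (1 + (norm x)\<^sup>2)) \<partial>lborel)"
    by (rule nn_integral_add; measurable)
  also have "\<dots> = emeasure lborel (cball (0::'a) R)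
      + ennreal (1 / R\<^sup>2) * (\<integral>\<^sup>+ x. ennreal (f x * (1 + (norm x)\<^sup>2)) \<partial>lborel)"
    using moment_meas by (simp add: nn_integral_cmult borel_closed)
  finally show ?thesis .
qed

lemma norm1s_2_eq:
  assumes "\<And>x. 0 \<le> f x"
  shows "norm1s 2 f = (\<integral>\<^sup>+ x. ennreal (f x * (1 + (norm x)\<^sup>2)) \<partial>lborel)"
  unfolding norm1s_def using assms by (simp add: add_pos_nonneg)

lemma nn_integral_le_norm1s_2_powr:
  fixes f :: "vec3 \<Rightarrow> real"
  assumes f_meas: "f \<in> borel_measurable lborel" and f: "\<And>x. 0 \<le> f x" "\<And>x. f x \<le> 1"
    and N: "norm1s 2 f = ennreal N" "0 < N"
  shows "(\<integral>\<^sup>+ x. ennreal (f x) \<partial>lborel) \<le> ennreal ((4/3 * pi + 1) * N powr (3/5))"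
proof -
  define R where "R = N powr (1/5)" \<comment> \<open>balances the volume R^3 against N / R^2\<close>
  have "0 < R" unfolding R_def using N(2) by simp
  have "R ^ 3 = N powr (3/5)" "R\<^sup>2 = N powr (2/5)"
    unfolding R_def using N(2) by (simp_all add: powr_realpow[symmetric] powr_powr)
  moreover have "N / N powr (2/5) = N powr (3/5)"
    using N(2) powr_diff[of N 1 "2/5"] by simp
  ultimately have identity: "4/3 * pi * R ^ 3 + 1 / R\<^sup>2 * N = (4/3 * pi + 1) * N powr (3/5)"
    by (simp add: algebra_simps)
  have "(\<integral>\<^sup>+ x. ennreal (f x) \<partial>lborel)
      \<le> emeasure lborel (cball (0::vec3) R) + ennreal (1 / R\<^sup>2) * norm1s 2 f"
    using nn_integral_le_cball_plus_moment[OF f_meas f \<open>0 < R\<close>] by (simp only: norm1s_2_eq[OF f(1)])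
  also have "\<dots> = ennreal (4/3 * pi * R ^ 3) + ennreal (1 / R\<^sup>2) * ennreal N"
    using \<open>0 < R\<close> by (simp add: emeasure_cball_vec3 N(1))
  also have "\<dots> = ennreal (4/3 * pi * R ^ 3 + 1 / R\<^sup>2 * N)"
    using \<open>0 < R\<close> N(2) by (simp add: ennreal_mult'[symmetric])
  finally show ?thesis unfolding identity .
qed

lemma norm1s_2_pos:
  fixes f :: "vec3 \<Rightarrow> real"
  assumes f: "\<And>x. 0 \<le> f x" and \<delta>: "0 < \<delta>" and \<epsilon>: "0 < \<epsilon>"
    and lower: "\<And>x. x \<in> cball c \<delta> \<Longrightarrow> \<epsilon> \<le> f x"
  shows "0 < norm1s 2 f"
proof -
  have "0 < ennreal \<epsilon> * emeasure lborel (cball c \<delta>)"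
    using \<epsilon> \<delta> by (simp add: emeasure_cball_vec3 ennreal_mult'[symmetric])
  also have "\<dots> = (\<integral>\<^sup>+ x. ennreal \<epsilon> * indicator (cball c \<delta>) x \<partial>lborel)"
    by (simp add: nn_integral_cmult_indicator borel_closed)
  also have "\<dots> \<le> norm1s 2 f"
    unfolding norm1s_2_eq[OF f]
  proof (intro nn_integral_mono)
    fix x :: vec3
    have "f x \<le> f x * (1 + (norm x)\<^sup>2)" using f[of x] by (simp add: mult_le_cancel_left1)
    then show "ennreal \<epsilon> * indicator (cball c \<delta>) x \<le> ennreal (f x * (1 + (norm x)\<^sup>2))"
      using lower[of x] by (auto simp: indicator_def intro: ennreal_leI)
  qed
  finally show ?thesis .
qed

lemma emeasure_le_nn_integral_one_minus_plus:
  fixes f :: "'a \<Rightarrow> real"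
  assumes [measurable]: "f \<in> borel_measurable M" "A \<in> sets M" and f: "\<And>x. f x \<le> 1"
  shows "emeasure M A
    \<le> (\<integral>\<^sup>+ x. indicator A x * ennreal (1 - f x) \<partial>M) + (\<integral>\<^sup>+ x. ennreal (f x) \<partial>M)"
proof -
  have one: "1 \<le> ennreal (1 - f x) + ennreal (f x)" for x
  proof (cases "0 \<le> f x")
    case True
    then show ?thesis using f[of x] by (simp add: ennreal_plus[symmetric])
  next
    case False
    then have "ennreal 1 \<le> ennreal (1 - f x)" by (intro ennreal_leI) simp
    then show ?thesis by (simp add: add_increasing2)
  qed
  have "emeasure M A = (\<integral>\<^sup>+ x. indicator A x \<partial>M)" by simp
  also have "\<dots> \<le> (\<integral>\<^sup>+ x. indicator A x * ennreal (1 - f x) + ennreal (f x) \<partial>M)"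
    using one by (intro nn_integral_mono) (auto simp: indicator_def)
  also have "\<dots> = (\<integral>\<^sup>+ x. indicator A x * ennreal (1 - f x) \<partial>M) + (\<integral>\<^sup>+ x. ennreal (f x) \<partial>M)"
    by (rule nn_integral_add) measurable
  finally show ?thesis .
qed

lemma Q1_ge_cball_volume_minus_mass:
  fixes v c :: vec3 and b :: "real \<Rightarrow> real" and f :: "vec3 \<Rightarrow> real"
  assumes \<delta>: "0 < \<delta>" and \<eta>: "0 < \<eta>" "\<eta> \<le> 3/10"
    and v: "\<delta> < norm (v - c)" "norm (v - c) \<le> sqrt 2 * \<delta> * (1 - \<eta>)"
    and \<gamma>: "0 \<le> \<gamma>" and cb: "0 \<le> cb" and b: "\<forall>\<theta>\<in>{pi/4..3*pi/4}. cb < b (cos \<theta>)"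
    and f_meas: "f \<in> borel_measurable lborel" and f: "\<And>w. f w \<le> 1"
    and \<epsilon>: "0 \<le> \<epsilon>" and lower: "\<And>w. w \<in> cball c \<delta> \<Longrightarrow> \<epsilon> \<le> f w"
    and mass: "(\<integral>\<^sup>+ w. ennreal (f w) \<partial>lborel) \<le> ennreal M" and M: "0 \<le> M"
  shows "ennreal (3/1600 * \<eta> * cb * (\<delta>/2) powr \<gamma> * \<epsilon>\<^sup>2 * (4/3 * pi * (\<delta> * sqrt \<eta> / 10) ^ 3 - M))
    \<le> Q1 \<gamma> b f f (\<lambda>w. 1 - f w) v"
proof -
  define \<rho> where "\<rho> = \<delta> * sqrt \<eta> / 10"
  define k where "k = 3/1600 * \<eta> * cb * (\<delta>/2) powr \<gamma> * \<epsilon>\<^sup>2"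
  define I where "I = (\<integral>\<^sup>+ w. indicator (cball c \<rho>) w * ennreal (1 - f w) \<partial>lborel)"
  have "0 \<le> k" "0 \<le> \<rho>" unfolding k_def \<rho>_def using \<delta> \<eta> cb by simp_all
  have "ennreal (4/3 * pi * \<rho> ^ 3) = emeasure lborel (cball c \<rho>)"
    using \<open>0 \<le> \<rho>\<close> by (simp add: emeasure_cball_vec3)
  also have "\<dots> \<le> I + (\<integral>\<^sup>+ w. ennreal (f w) \<partial>lborel)"
    unfolding I_def using f_meas f by (intro emeasure_le_nn_integral_one_minus_plus) (auto simp: borel_closed)
  also have "\<dots> \<le> I + ennreal M"
    using mass by (rule add_left_mono)
  finally have "ennreal (4/3 * pi * \<rho> ^ 3) \<le> ennreal M + I" by (simp add: add.commute)
  then have "ennreal (4/3 * pi * \<rho> ^ 3 - M) \<le> I"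
    using M by (simp add: ennreal_minus[symmetric] ennreal_minus_le_iff)
  then have "ennreal (k * (4/3 * pi * \<rho> ^ 3 - M)) \<le> ennreal k * I"
    using \<open>0 \<le> k\<close> by (simp add: ennreal_mult' mult_left_mono)
  also have "\<dots> \<le> Q1 \<gamma> b f f (\<lambda>w. 1 - f w) v"
    unfolding k_def I_def \<rho>_def
    by (rule Q1_ge_cball_integral[OF \<delta> \<eta> v \<gamma> cb b \<epsilon> lower lower]) (use f_meas f in auto)
  finally show ?thesis unfolding k_def \<rho>_def .
qed

lemma Q1_gain_lower_bound:
  fixes v c :: vec3 and b :: "real \<Rightarrow> real" and f :: "vec3 \<Rightarrow> real"
  assumes \<delta>: "0 < \<delta>" and \<eta>: "0 < \<eta>" "\<eta> \<le> 3/10"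
    and v: "\<delta> < norm (v - c)" "norm (v - c) \<le> sqrt 2 * \<delta> * (1 - \<eta>)"
    and \<gamma>: "0 \<le> \<gamma>" and cb: "0 \<le> cb" and b: "\<forall>\<theta>\<in>{pi/4..3*pi/4}. cb < b (cos \<theta>)"
    and f_meas: "f \<in> borel_measurable lborel" and f: "\<And>w. 0 \<le> f w" "\<And>w. f w \<le> 1"
    and fin: "norm1s 2 f < \<infinity>"
    and \<epsilon>: "0 < \<epsilon>" and lower: "\<And>w. w \<in> cball c \<delta> \<Longrightarrow> \<epsilon> \<le> f w"
  shows "ennreal (\<delta> powr (3 + \<gamma>) * \<epsilon>\<^sup>2 * (cb * pi / (400000 * 2 powr \<gamma>) * \<eta> powr (5/2)
      - 3 * cb * (4/3 * pi + 1) / (1600 * 2 powr \<gamma>) * min (\<delta> powr (-3) * enn2real (norm1s 2 f) powr (3/5)) 1))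
    \<le> Q1 \<gamma> b f f (\<lambda>w. 1 - f w) v"
proof -
  define N where "N = enn2real (norm1s 2 f)"
  have N: "norm1s 2 f = ennreal N" "0 < N"
    using fin norm1s_2_pos[OF f(1) \<delta> \<epsilon> lower] unfolding N_def
    by (auto simp: ennreal_enn2real_if enn2real_positive_iff)
  define M where "M = (4/3 * pi + 1) * N powr (3/5)"
  have mass: "(\<integral>\<^sup>+ w. ennreal (f w) \<partial>lborel) \<le> ennreal M"
    unfolding M_def by (rule nn_integral_le_norm1s_2_powr[OF f_meas f N])
  have "0 \<le> M" unfolding M_def using pi_gt_zero by simp
  define C1 where "C1 = cb * pi / (400000 * 2 powr \<gamma>)"
  define C2 where "C2 = 3 * cb * (4/3 * pi + 1) / (1600 * 2 powr \<gamma>)"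
  define P where "P = \<delta> powr (3 + \<gamma>) * \<epsilon>\<^sup>2"
  define x where "x = \<delta> powr (-3) * N powr (3/5)"
  have "0 \<le> P" "0 \<le> x" "0 \<le> C1" and E: "\<eta> powr (5/2) \<le> 1"
    unfolding P_def x_def C1_def using cb \<eta> powr_mono'[of 0 "5/2" \<eta>] by auto
  have "pi / 400000 \<le> 3 * (4/3 * pi + 1) / 1600" using pi_gt_zero by simp
  then have "cb * (pi / 400000) / 2 powr \<gamma> \<le> cb * (3 * (4/3 * pi + 1) / 1600) / 2 powr \<gamma>"
    using cb by (intro divide_right_mono mult_left_mono) auto
  then have "C1 \<le> C2" unfolding C1_def C2_def by (simp add: field_simps)
  have loss_eq: "3/1600 * \<eta> * cb * (\<delta>/2) powr \<gamma> * \<epsilon>\<^sup>2 * (4/3 * pi * (\<delta> * sqrt \<eta> / 10) ^ 3 - M)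
      = P * (C1 * \<eta> powr (5/2) - \<eta> * C2 * x)"
    unfolding M_def P_def C1_def C2_def x_def by (rule collision_loss_factor[OF \<delta> less_imp_le[OF \<eta>(1)]])
  have "ennreal (P * (C1 * \<eta> powr (5/2) - C2 * min x 1)) \<le> ennreal (P * (C1 * \<eta> powr (5/2) - \<eta> * C2 * x))"
  proof (cases "x \<le> 1")
    case True
    have "\<eta> * (C2 * x) \<le> C2 * x"
      using \<eta> \<open>0 \<le> x\<close> \<open>0 \<le> C1\<close> \<open>C1 \<le> C2\<close> by (intro mult_left_le_one_le) auto
    then show ?thesis using True \<open>0 \<le> P\<close> by (intro ennreal_leI mult_left_mono) (auto simp: mult.assoc)
  next
    case False \<comment> \<open>then the claimed bound is not positive, because C1 \<le> C2\<close>
    have "C1 * \<eta> powr (5/2) \<le> C1" using E \<open>0 \<le> C1\<close> by (simp add: mult_left_le)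
    then have "P * (C1 * \<eta> powr (5/2) - C2 * min x 1) \<le> 0"
      using False \<open>0 \<le> P\<close> \<open>C1 \<le> C2\<close> by (simp add: mult_nonneg_nonpos)
    then show ?thesis by (simp add: ennreal_neg)
  qed
  also have "\<dots> \<le> Q1 \<gamma> b f f (\<lambda>w. 1 - f w) v"
    unfolding loss_eq[symmetric]
    by (rule Q1_ge_cball_volume_minus_mass[OF \<delta> \<eta> v \<gamma> cb b f_meas f(2) less_imp_le[OF \<epsilon>] lower mass \<open>0 \<le> M\<close>])
  finally show ?thesis unfolding P_def C1_def C2_def x_def N_def .
qed

lemma le_of_less_one_minus_inverse_sqrt2:
  fixes \<eta> :: real
  assumes "\<eta> < 1 - 1 / sqrt 2"
  shows "\<eta> \<le> 3/10"
proof -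
  have "sqrt 2 < 10/7" by (rule real_less_lsqrt) (auto simp: power2_eq_square)
  then have "7/10 < 1 / sqrt 2" by (simp add: field_simps)
  then show ?thesis using assms by simp
qed

theorem lemma5p2:
  fixes \<gamma> cb :: real
  assumes "0 \<le> \<gamma>" "\<gamma> \<le> 2" "cb > 0"
  shows "\<exists>C3>0. \<forall>Cb>0. \<exists>C1>0. \<exists>C2>0.
    \<forall>(b :: real \<Rightarrow> real) (f :: vec3 \<Rightarrow> real) (vbar :: vec3) (\<delta> :: real) (\<epsilon> :: real).
      admissible_b b \<and> Cb_of b = ennreal Cb
      \<and> (\<forall>\<theta>\<in>{pi/4..3*pi/4}. b (cos \<theta>) > cb)
      \<and> f \<in> borel_measurable lborel \<and> (\<forall>v. 0 \<le> f v \<and> f v \<le> 1)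
      \<and> norm1s 2 f < \<infinity>
      \<and> \<delta> > 0 \<and> 0 < \<epsilon> \<and> \<epsilon> < 1
      \<and> (\<forall>v. norm (v - vbar) \<le> \<delta> \<longrightarrow> f v \<ge> \<epsilon>)
      \<longrightarrow>
      (\<forall>\<eta> v. 0 < \<eta> \<and> \<eta> < 1 - 1 / sqrt 2
          \<and> \<delta> < norm (v - vbar) \<and> norm (v - vbar) \<le> sqrt 2 * \<delta> * (1 - \<eta>) \<longrightarrow>
        Q1 \<gamma> b f f (\<lambda>w. 1 - f w) v \<ge>
          ennreal (\<delta> powr (3 + \<gamma>) * \<epsilon>\<^sup>2 *
            (C1 * \<eta> powr (5/2)
             - C2 * min (\<delta> powr (-3) * enn2real (norm1s 2 f) powr (3/5)) 1)))
      \<and> ((\<forall>v. norm (v - vbar) \<le> \<delta> \<longrightarrow> f v \<le> 1 - \<epsilon>) \<longrightarrow>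
         (\<forall>\<eta> v. 0 < \<eta> \<and> \<eta> < 1 - 1 / sqrt 2
            \<and> \<delta> < norm (v - vbar) \<and> norm (v - vbar) \<le> sqrt 2 * \<delta> * (1 - \<eta>) \<longrightarrow>
          Q1 \<gamma> b f f (\<lambda>w. 1 - f w) v \<ge> ennreal (C3 * \<delta> powr (3 + \<gamma>) * \<eta> powr (5/2) * \<epsilon> ^ 3)
          \<and> Q1 \<gamma> b (\<lambda>w. 1 - f w) (\<lambda>w. 1 - f w) f v \<ge> ennreal (C3 * \<delta> powr (3 + \<gamma>) * \<eta> powr (5/2) * \<epsilon> ^ 3)))"
proof -
  define C where "C = cb * pi / (400000 * 2 powr \<gamma>)"
  define C' where "C' = 3 * cb * (4/3 * pi + 1) / (1600 * 2 powr \<gamma>)"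
  have "0 < C" "0 < C'" unfolding C_def C'_def using \<open>cb > 0\<close> pi_gt_zero by (simp_all add: add_pos_pos)
  have cb: "0 \<le> cb" using \<open>cb > 0\<close> by simp
  have gain: "Q1 \<gamma> b f f (\<lambda>w. 1 - f w) v \<ge> ennreal (\<delta> powr (3 + \<gamma>) * \<epsilon>\<^sup>2 *
      (C * \<eta> powr (5/2) - C' * min (\<delta> powr (-3) * enn2real (norm1s 2 f) powr (3/5)) 1))"
    if b: "\<forall>\<theta>\<in>{pi/4..3*pi/4}. cb < b (cos \<theta>)" and f_meas: "f \<in> borel_measurable lborel"
      and f: "\<forall>v. 0 \<le> f v \<and> f v \<le> 1" and fin: "norm1s 2 f < \<infinity>" and \<delta>: "0 < \<delta>" and \<epsilon>: "0 < \<epsilon>"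
      and lower: "\<forall>v. norm (v - vbar) \<le> \<delta> \<longrightarrow> \<epsilon> \<le> f v"
      and \<eta>: "0 < \<eta>" "\<eta> < 1 - 1 / sqrt 2"
      and v: "\<delta> < norm (v - vbar)" "norm (v - vbar) \<le> sqrt 2 * \<delta> * (1 - \<eta>)"
    for b f vbar \<delta> \<epsilon> \<eta> v
    unfolding C_def C'_def
    using Q1_gain_lower_bound[OF \<delta> \<eta>(1) le_of_less_one_minus_inverse_sqrt2[OF \<eta>(2)] v \<open>0 \<le> \<gamma>\<close> cb b f_meas]
      f fin \<epsilon> lower by (auto simp: dist_norm norm_minus_commute)
  have both: "Q1 \<gamma> b f f (\<lambda>w. 1 - f w) v \<ge> ennreal (C * \<delta> powr (3 + \<gamma>) * \<eta> powr (5/2) * \<epsilon> ^ 3)"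
      "Q1 \<gamma> b (\<lambda>w. 1 - f w) (\<lambda>w. 1 - f w) f v \<ge> ennreal (C * \<delta> powr (3 + \<gamma>) * \<eta> powr (5/2) * \<epsilon> ^ 3)"
    if b: "\<forall>\<theta>\<in>{pi/4..3*pi/4}. cb < b (cos \<theta>)" and f_meas: "f \<in> borel_measurable lborel"
      and f: "\<forall>v. 0 \<le> f v \<and> f v \<le> 1" and \<delta>: "0 < \<delta>" and \<epsilon>: "0 < \<epsilon>"
      and lower: "\<forall>v. norm (v - vbar) \<le> \<delta> \<longrightarrow> \<epsilon> \<le> f v"
      and upper: "\<forall>v. norm (v - vbar) \<le> \<delta> \<longrightarrow> f v \<le> 1 - \<epsilon>"
      and \<eta>: "0 < \<eta>" "\<eta> < 1 - 1 / sqrt 2"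
      and v: "\<delta> < norm (v - vbar)" "norm (v - vbar) \<le> sqrt 2 * \<delta> * (1 - \<eta>)"
    for b f vbar \<delta> \<epsilon> \<eta> v
    using f_meas borel_measurable_diff[OF borel_measurable_const f_meas, of 1] f lower upper unfolding C_def
    by (intro Q1_lower_bound_of_ge_on_cball[OF \<delta> \<eta>(1) le_of_less_one_minus_inverse_sqrt2[OF \<eta>(2)] v
        \<open>0 \<le> \<gamma>\<close> cb b less_imp_le[OF \<epsilon>]]; auto simp: dist_norm norm_minus_commute)+
  show ?thesis
    apply (rule exI[of _ C], intro conjI allI impI \<open>0 < C\<close>)
    apply (rule exI[of _ C], intro conjI \<open>0 < C\<close>)
    apply (rule exI[of _ C'], intro conjI \<open>0 < C'\<close> allI impI)
    using gain both by auto
qed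

end
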